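(* Let $(X,\widetilde{\tau},\mathfrak{a}_E,E)$ be a soft aura topological space. Then: (i) an arbitrary soft union of soft $\mathfrak{a}$-semi-open sets is soft $\mathfrak{a}$-semi-open; (ii) an arbitrary soft union of soft $\mathfrak{a}$-pre-open sets is soft $\mathfrak{a}$-pre-open; (iii) an arbitrary soft union of soft $\mathfrak{a}$-$\beta$-open sets is soft $\mathfrak{a}$-$\beta$-open.
   Context: Let $X$ be a nonempty set and $E$ a nonempty parameter set. A soft set over $X$ is a map $F:E\to\mathcal{P}(X)$, written $(F,E)$; $\mathrm{SS}(X,E)$ denotes all soft sets; $\sqsubseteq$ and (arbitrary) soft union $\bigsqcup$ are parameterwise inclusion and union. A soft topology $\widetilde{\tau}$ is a subfamily of $\mathrm{SS}(X,E)$ containing the soft sets with all values $\emptyset$ and all values $X$, closed under arbitrary soft unions and finite soft intersections. A soft scope function is a map $\mathfrak{a}_E:X\to\widetilde{\tau}$ with $x\in\mathfrak{a}_E(x)(e)$ for all $x\in X$, $e\in E$; $(X,\widetilde{\tau},\mathfrak{a}_E,E)$ is a soft aura topological space. $\mathrm{cl}_{\mathfrak{a}}(G,E)(e)=\{x:\mathfrak{a}_E(x)(e)\cap G(e)\neq\emptyset\}$, $\mathrm{int}_{\mathfrak{a}}(G,E)(e)=\{x:\mathfrak{a}_E(x)(e)\subseteq G(e)\}$. $(G,E)$ is soft $\mathfrak{a}$-semi-open if $(G,E)\sqsubseteq\mathrm{cl}_{\mathfrak{a}}(\mathrm{int}_{\mathfrak{a}}(G,E))$; soft $\mathfrak{a}$-pre-open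 if $(G,E)\sqsubseteq\mathrm{int}_{\mathfrak{a}}(\mathrm{cl}_{\mathfrak{a}}(G,E))$; soft $\mathfrak{a}$-$\beta$-open if $(G,E)\sqsubseteq\mathrm{cl}_{\mathfrak{a}}(\mathrm{int}_{\mathfrak{a}}(\mathrm{cl}_{\mathfrak{a}}(G,E)))$. *)

theory Defs
  imports Main
begin

text \<open>Soft sets over the universe X = UNIV :: 'x set with parameter set E = UNIV :: 'e set
  are maps 'e \<Rightarrow> 'x set.  (HOL types are nonempty, matching the standing assumptions.)\<close>

type_synonym ('e, 'x) soft_set = "'e \<Rightarrow> 'x set"

definition soft_subset :: "('e, 'x) soft_set \<Rightarrow> ('e, 'x) soft_set \<Rightarrow> bool" where
  "soft_subset F G \<longleftrightarrow> (\<forall>e. F e \<subseteq> G e)"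

definition soft_Union :: "('e, 'x) soft_set set \<Rightarrow> ('e, 'x) soft_set" where
  "soft_Union S = (\<lambda>e. \<Union>F\<in>S. F e)"

definition soft_inter :: "('e, 'x) soft_set \<Rightarrow> ('e, 'x) soft_set \<Rightarrow> ('e, 'x) soft_set" where
  "soft_inter F G = (\<lambda>e. F e \<inter> G e)"

definition soft_null :: "('e, 'x) soft_set" where
  "soft_null = (\<lambda>e. {})"

definition soft_absolute :: "('e, 'x) soft_set" where
  "soft_absolute = (\<lambda>e. UNIV)"

definition soft_topology :: "('e, 'x) soft_set set \<Rightarrow> bool" where
  "soft_topology T \<longleftrightarrow>
     soft_null \<in> T \<and> soft_absolute \<in> T \<and>
     (\<forall>S. S \<subseteq> T \<longrightarrow> soft_Union S \<in> T) \<and>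
     (\<forall>F\<in>T. \<forall>G\<in>T. soft_inter F G \<in> T)"

definition soft_scope :: "('e, 'x) soft_set set \<Rightarrow> ('x \<Rightarrow> ('e, 'x) soft_set) \<Rightarrow> bool" where
  "soft_scope T a \<longleftrightarrow> (\<forall>x. a x \<in> T \<and> (\<forall>e. x \<in> a x e))"

definition soft_aura_space :: "('e, 'x) soft_set set \<Rightarrow> ('x \<Rightarrow> ('e, 'x) soft_set) \<Rightarrow> bool" where
  "soft_aura_space T a \<longleftrightarrow> soft_topology T \<and> soft_scope T a"

definition cl_a :: "('x \<Rightarrow> ('e, 'x) soft_set) \<Rightarrow> ('e, 'x) soft_set \<Rightarrow> ('e, 'x) soft_set" where
  "cl_a a G = (\<lambda>e. {x. a x e \<inter> G e \<noteq> {}})"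

definition int_a :: "('x \<Rightarrow> ('e, 'x) soft_set) \<Rightarrow> ('e, 'x) soft_set \<Rightarrow> ('e, 'x) soft_set" where
  "int_a a G = (\<lambda>e. {x. a x e \<subseteq> G e})"

definition soft_a_semi_open where
  "soft_a_semi_open a G \<longleftrightarrow> soft_subset G (cl_a a (int_a a G))"

definition soft_a_pre_open where
  "soft_a_pre_open a G \<longleftrightarrow> soft_subset G (int_a a (cl_a a G))"

definition soft_a_beta_open where
  "soft_a_beta_open a G \<longleftrightarrow> soft_subset G (cl_a a (int_a a (cl_a a G)))"

end

theory Submission
  imports Defs
begin

text \<open>Soft sets ordered by \<open>\<sqsubseteq>\<close> form the complete lattice of functions \<open>'e \<Rightarrow> 'x set\<close>,
  with soft union as supremum. Each of the three notions says that \<open>G\<close> lies below its image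
  under a composite of the monotone operators \<open>cl\<^sub>a\<close> and \<open>int\<^sub>a\<close>, and for any monotone
  operator these post-fixed points are closed under arbitrary suprema.\<close>

lemma soft_subset_iff_le: "soft_subset F G \<longleftrightarrow> F \<le> G"
  unfolding soft_subset_def le_fun_def by simp

lemma soft_Union_eq_Sup: "soft_Union S = Sup S"
  unfolding soft_Union_def by (simp add: fun_eq_iff)

lemma mono_cl_a: "mono (cl_a a)"
  unfolding cl_a_def by (rule monoI) (auto simp: le_fun_def)

lemma mono_int_a: "mono (int_a a)"
  unfolding int_a_def by (rule monoI) (auto simp: le_fun_def)

lemma mono_comp: "mono f \<Longrightarrow> mono g \<Longrightarrow> mono (f \<circ> g)"
  using monotone_on_o[of UNIV] by blast

lemma Sup_postfixed_if_mono:
  fixes f :: "'a::complete_lattice \<Rightarrow> 'a"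
  assumes "mono f" and "\<And>x. x \<in> A \<Longrightarrow> x \<le> f x"
  shows "Sup A \<le> f (Sup A)"
proof -
  have "Sup A \<le> (SUP x\<in>A. f x)"
    using assms(2) by (auto intro!: Sup_mono)
  also have "\<dots> \<le> f (Sup A)"
    using assms(1) by (rule mono_Sup)
  finally show ?thesis .
qed

lemma soft_Union_postfixed_if_mono:
  assumes "mono \<Phi>" and "\<forall>G\<in>S. soft_subset G (\<Phi> G)"
  shows "soft_subset (soft_Union S) (\<Phi> (soft_Union S))"
  using Sup_postfixed_if_mono[OF assms(1)] assms(2)
  by (simp add: soft_subset_iff_le soft_Union_eq_Sup)

theorem theorem4p4:
  fixes T :: "('e, 'x) soft_set set" and a :: "'x \<Rightarrow> ('e, 'x) soft_set"
  assumes "soft_aura_space T a"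
  shows "(\<forall>S. (\<forall>G\<in>S. soft_a_semi_open a G) \<longrightarrow> soft_a_semi_open a (soft_Union S))
       \<and> (\<forall>S. (\<forall>G\<in>S. soft_a_pre_open a G) \<longrightarrow> soft_a_pre_open a (soft_Union S))
       \<and> (\<forall>S. (\<forall>G\<in>S. soft_a_beta_open a G) \<longrightarrow> soft_a_beta_open a (soft_Union S))"
proof -
  have "mono (cl_a a \<circ> int_a a)" "mono (int_a a \<circ> cl_a a)" "mono (cl_a a \<circ> int_a a \<circ> cl_a a)"
    by (intro mono_comp mono_cl_a mono_int_a)+
  then show ?thesis
    unfolding soft_a_semi_open_def soft_a_pre_open_def soft_a_beta_open_def
    using soft_Union_postfixed_if_mono by (metis comp_apply)
qed

end
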